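(* Let $(N_r)_{r\in\mathbb{Z}}$ be the Narayana sequence and for $1\le b\le 4$ and $r\ge 0$ let $S_{N,r}^{(4,b)}=\sum_{k=0}^{r}N_{4k+b}$. Then for every $r\ge 3$, $$S_{N,r}^{(4,b)}=5S_{N,r-1}^{(4,b)}-2S_{N,r-2}^{(4,b)}+S_{N,r-3}^{(4,b)}+c_b,$$ where $c_1=-1$, $c_2=c_4=1$ and $c_3=2$.
   Context: The Narayana sequence $(N_r)_{r\in\mathbb{Z}}$ is defined by $N_0=0$, $N_1=N_2=1$ and $N_r=N_{r-1}+N_{r-3}$ for all integers $r$. *)

theory Defs
  imports Main
begin

text \<open>Narayana sequence on nonnegative indices: N 0 = 0, N 1 = N 2 = 1,
  N r = N (r-1) + N (r-3).  Only nonnegative indices occur in the theorem.\<close>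
fun narayana :: "nat \<Rightarrow> int" where
  "narayana 0 = 0"
| "narayana (Suc 0) = 1"
| "narayana (Suc (Suc 0)) = 1"
| "narayana (Suc (Suc (Suc n))) = narayana (Suc (Suc n)) + narayana n"

definition S4 :: "nat \<Rightarrow> nat \<Rightarrow> int" where
  "S4 b r = (\<Sum>k=0..r. narayana (4 * k + b))"

definition c4 :: "nat \<Rightarrow> int" where
  "c4 b = (if b = 1 then -1 else if b = 3 then 2 else 1)"

end

theory Submission
  imports Defs
begin

text \<open>The fourth powers of the roots of the Narayana polynomial \<open>x\<^sup>3 - x\<^sup>2 - 1\<close> are the
  roots of \<open>y\<^sup>3 - 5y\<^sup>2 + 2y - 1\<close>, so every subsequence \<open>N (4k + b)\<close> satisfies the
  recurrence with coefficients \<open>5, -2, 1\<close>. For partial sums of any sequence obeying that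
  recurrence, the defect \<open>S (r+3) - 5 S (r+2) + 2 S (r+1) - S r\<close> is constant in \<open>r\<close>, because
  its increment is exactly the recurrence for the summands. The constant \<open>c\<^sub>b\<close> is the defect
  at \<open>r = 0\<close>, computed from the first few Narayana numbers.\<close>

lemma narayana_add_12:
  "narayana (n + 12) = 5 * narayana (n + 8) - 2 * narayana (n + 4) + narayana n"
  by (simp add: eval_nat_numeral)

lemma sum_atMost_recurrence_defect_const:
  fixes u :: "nat \<Rightarrow> 'a::comm_ring_1"
  assumes rec: "\<And>n. u (n + 3) = 5 * u (n + 2) - 2 * u (n + 1) + u n"
  shows "(\<Sum>k\<le>r + 3. u k) - 5 * (\<Sum>k\<le>r + 2. u k) + 2 * (\<Sum>k\<le>r + 1. u k) - (\<Sum>k\<le>r. u k)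
       = (\<Sum>k\<le>3. u k) - 5 * (\<Sum>k\<le>2. u k) + 2 * (\<Sum>k\<le>1. u k) - (\<Sum>k\<le>0. u k)"
proof (induction r)
  case 0
  show ?case by (simp only: add_0)
next
  case (Suc r)
  have "(\<Sum>k\<le>Suc r + 3. u k) - 5 * (\<Sum>k\<le>Suc r + 2. u k) + 2 * (\<Sum>k\<le>Suc r + 1. u k)
          - (\<Sum>k\<le>Suc r. u k)
        = (\<Sum>k\<le>r + 3. u k) - 5 * (\<Sum>k\<le>r + 2. u k) + 2 * (\<Sum>k\<le>r + 1. u k) - (\<Sum>k\<le>r. u k)
          + (u (Suc (r + 3)) - 5 * u (Suc (r + 2)) + 2 * u (Suc (r + 1)) - u (Suc r))"
    by (simp only: add_Suc sum.atMost_Suc) (simp add: algebra_simps)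
  also have "u (Suc (r + 3)) - 5 * u (Suc (r + 2)) + 2 * u (Suc (r + 1)) - u (Suc r) = 0"
    using rec[of "Suc r"] by (simp add: algebra_simps)
  finally show ?case unfolding add_0_right Suc.IH .
qed

lemma S4_recurrence_defect:
  "S4 b (r + 3) - 5 * S4 b (r + 2) + 2 * S4 b (r + 1) - S4 b r
     = S4 b 3 - 5 * S4 b 2 + 2 * S4 b 1 - S4 b 0"
proof -
  have "narayana (4 * (n + 3) + b)
          = 5 * narayana (4 * (n + 2) + b) - 2 * narayana (4 * (n + 1) + b) + narayana (4 * n + b)"
    for n
    using narayana_add_12[of "4 * n + b"] by (simp add: algebra_simps)
  from sum_atMost_recurrence_defect_const[of "\<lambda>k. narayana (4 * k + b)", OF this]
  show ?thesis by (simp add: S4_def atLeast0AtMost)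
qed

lemma S4_initial_defect:
  assumes "1 \<le> b" and "b \<le> 4"
  shows "S4 b 3 - 5 * S4 b 2 + 2 * S4 b 1 - S4 b 0 = c4 b"
proof -
  have "b = 1 \<or> b = 2 \<or> b = 3 \<or> b = 4" using assms by auto
  then show ?thesis by (auto simp: S4_def c4_def eval_nat_numeral)
qed

theorem theorem7:
  fixes b r :: nat
  assumes "1 \<le> b" and "b \<le> 4" and "3 \<le> r"
  shows "S4 b r = 5 * S4 b (r - 1) - 2 * S4 b (r - 2) + S4 b (r - 3) + c4 b"
proof -
  obtain m where r: "r = m + 3" using \<open>3 \<le> r\<close> by (metis add.commute le_Suc_ex)
  have "S4 b (m + 3) - 5 * S4 b (m + 2) + 2 * S4 b (m + 1) - S4 b m = c4 b"
    using S4_recurrence_defect S4_initial_defect[OF assms(1,2)] by simp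
  then show ?thesis by (simp add: r algebra_simps)
qed

end
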